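(* Let $g$, $h$, $(\delta_\varepsilon)_\varepsilon$ be as below and let $(x_\varepsilon)_\varepsilon\in C^\infty(\mathbb{R}^n\times\mathbb{R}^n\times\mathbb{R},\mathbb{R}^n)^{(0,1]}$ be an asymptotic solution of the initial value problem $(\ast)$. Then $(x_\varepsilon)_\varepsilon$ is uniformly bounded on compact subsets of $\mathbb{R}^n\times\mathbb{R}^n\times\mathbb{R}$, i.e., for every compact $M\subseteq\mathbb{R}^n\times\mathbb{R}^n\times\mathbb{R}$ there exist $C_M>0$ and $\varepsilon_1\in(0,1]$ with $\sup_{M}|x_\varepsilon|\le C_M$ for all $\varepsilon\le\varepsilon_1$.
   Context: $g\in C^\infty(\mathbb{R}^n,\mathbb{R}^n)$, $h\in C^\infty(\mathbb{R},\mathbb{R}^n)$, and $(\delta_\varepsilon)_{\varepsilon\in(0,1]}$ is a net of smooth real functions on $\mathbb{R}$ with $\operatorname{supp}\delta_\varepsilon\subseteq[-\varepsilon,\varepsilon]$ and $\int|\delta_\varepsilon|\le C$ for some $C>0$ and all small $\varepsilon$. The problem $(\ast)$ is: $\ddot x_\varepsilon(t)=g(x_\varepsilon(t))\delta_\varepsilon(t)+h(t)$, $x_\varepsilon(-1)=x_0$, $\dot x_\varepsilon(-1)=\dot x_0$. An asymptotic solution of $(\ast)$ is a net $(x_\varepsilon)_\varepsilon\in C^\infty(\mathbb{R}^n\times\mathbb{R}^n\times\mathbb{R},\mathbb{R}^n)^{(0,1]}$ such that for every compact $K\subseteq\mathbb{R}^{2n}$ there is $\varepsilon_K\in(0,1]$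 with the property that for all $(x_0,\dot x_0)\in K$ and $\varepsilon\le\varepsilon_K$, $t\mapsto x_\varepsilon(x_0,\dot x_0,t)$ solves $(\ast)$ on all of $\mathbb{R}$. *)

theory Defs
  imports "HOL-Analysis.Analysis"
begin

text \<open>C^k via iterated (Frechet) directional derivatives; in finite dimensions this is the
usual notion of k-times continuously differentiable on the whole space.\<close>
fun Ck :: "nat \<Rightarrow> ('a::real_normed_vector \<Rightarrow> 'b::real_normed_vector) \<Rightarrow> bool" where
  "Ck 0 f = continuous_on UNIV f"
| "Ck (Suc k) f = ((\<forall>x. f differentiable (at x)) \<and>
      (\<forall>v. Ck k (\<lambda>x. frechet_derivative f (at x) v)))"

definition smooth :: "('a::real_normed_vector \<Rightarrow> 'b::real_normed_vector) \<Rightarrow> bool" where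
  "smooth f \<longleftrightarrow> (\<forall>k. Ck k f)"

definition solves_ivp ::
  "('v::real_normed_vector \<Rightarrow> 'v) \<Rightarrow> (real \<Rightarrow> 'v) \<Rightarrow> (real \<Rightarrow> real) \<Rightarrow> 'v \<Rightarrow> 'v \<Rightarrow> (real \<Rightarrow> 'v) \<Rightarrow> bool"
  where
  "solves_ivp g h \<delta> x0 x1 y \<longleftrightarrow>
     y (-1) = x0 \<and>
     (\<exists>y'. y' (-1) = x1 \<and>
        (\<forall>t. (y has_vector_derivative y' t) (at t)) \<and>
        (\<forall>t. (y' has_vector_derivative (\<delta> t *\<^sub>R g (y t) + h t)) (at t)))"

end

theory Submission
  imports Defs
begin

text \<open>
  Fix a compact set M of data (x0, x1, t); it lies in a box |x0|, |x1| \<le> R, |t| \<le> T.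
  For a solution y of  y'' = \<delta>(t) g(y) + h(t),  y(-1) = x0,  y'(-1) = x1,  whose kick \<delta> is
  supported in [-e, e] and has L1-norm at most C, we prove an a priori bound that is uniform in
  the small parameter e:
   (1) before the kick, i.e. on [-1, -2e], y'' = h, so y and y' stay bounded by data only;
   (2) during the kick, i.e. on [-2e, e], a continuity (bootstrap) argument shows that y stays in
       a fixed ball on which g is bounded by G: as long as it does, the velocity is bounded by
       V = R + C G + 2 T H, so y moves by at most 3 e V \<le> 1/2, and cannot leave the ball;
   (3) hence everywhere on [-T, T] the velocity is bounded by V and |y(t)| \<le> R + 2 T V.  From them follows a
  bound, uniform for small e, on all solutions with data in a box; the theorem is obtained by
  putting M in such a box and using that x_e solves the problem for data in the projection of M.
\<close>

lemma norm_increment_le_integral: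
  fixes f f' :: "real \<Rightarrow> 'a::banach" and \<phi> :: "real \<Rightarrow> real"
  assumes deriv: "\<And>t. (f has_vector_derivative f' t) (at t)"
    and bound: "\<And>t. t \<in> {min a b..max a b} \<Longrightarrow> norm (f' t) \<le> \<phi> t"
    and int: "\<phi> integrable_on {min a b..max a b}"
  shows "norm (f b - f a) \<le> integral {min a b..max a b} \<phi>"
proof -
  have ordered: "norm (f v - f u) \<le> integral {min a b..max a b} \<phi>"
    if uv: "u \<le> v" "{u..v} = {min a b..max a b}" for u v
  proof -
    have "(f' has_integral (f v - f u)) {u..v}"
      using fundamental_theorem_of_calculus[OF \<open>u \<le> v\<close>] deriv has_vector_derivative_at_within
      by blast
    then have "f' integrable_on {u..v}" "integral {u..v} f' = f v - f u"
      using has_integral_integrable integral_unique by blast+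
    then show ?thesis
      using integral_norm_bound_integral[of f' "{u..v}" \<phi>] bound int uv(2) by auto
  qed
  show ?thesis
  proof (cases "a \<le> b")
    case True
    then show ?thesis using ordered[of a b] by simp
  next
    case False
    then show ?thesis using ordered[of b a] by (simp add: norm_minus_commute)
  qed
qed

lemma norm_increment_le_const:
  fixes f f' :: "real \<Rightarrow> 'a::banach"
  assumes "\<And>t. (f has_vector_derivative f' t) (at t)"
    and "\<And>t. t \<in> {min a b..max a b} \<Longrightarrow> norm (f' t) \<le> c"
  shows "norm (f b - f a) \<le> \<bar>b - a\<bar> * c"
proof -
  have "norm (f b - f a) \<le> integral {min a b..max a b} (\<lambda>_. c)"
    by (rule norm_increment_le_integral[OF assms integrable_const_ivl])
  also have "\<dots> = \<bar>b - a\<bar> * c"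
    by (cases "a \<le> b") auto
  finally show ?thesis .
qed

lemma continuity_bootstrap:
  fixes \<phi> :: "real \<Rightarrow> real"
  assumes cont: "continuous_on {a..b} \<phi>" and start: "\<phi> a < B" and better: "B' < B"
    and improve: "\<And>s u. s \<in> {a..b} \<Longrightarrow> \<forall>v\<in>{a..<s}. \<phi> v < B \<Longrightarrow> u \<in> {a..<s} \<Longrightarrow> \<phi> u \<le> B'"
    and s: "s \<in> {a..b}"
  shows "\<phi> s < B"
proof (rule ccontr)
  assume "\<not> \<phi> s < B"
  define Z where "Z = {a..b} \<inter> \<phi> -` {B..}"
  have "s \<in> Z" using s \<open>\<not> \<phi> s < B\<close> by (auto simp: Z_def)
  moreover have "closed Z"
    unfolding Z_def by (rule continuous_closed_preimage[OF cont]) auto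
  moreover have bdd: "bdd_below Z" by (auto simp: Z_def bdd_below_def)
  ultimately have "Inf Z \<in> Z" using closed_contains_Inf by blast
  define s0 where "s0 = Inf Z"
  have first: "s0 \<in> {a..b}" "B \<le> \<phi> s0" using \<open>Inf Z \<in> Z\<close> by (auto simp: Z_def s0_def)
  have "a < s0" using first start by (cases "s0 = a") auto
  have below: "\<forall>v\<in>{a..<s0}. \<phi> v < B"
  proof
    fix v assume v: "v \<in> {a..<s0}"
    show "\<phi> v < B"
    proof (rule ccontr)
      assume "\<not> \<phi> v < B"
      then have "v \<in> Z" using v first(1) by (auto simp: Z_def)
      then show False using cInf_lower[OF _ bdd, of v] v by (simp add: s0_def)
    qed
  qed
  have "{a..<s0} \<subseteq> {a..b} \<inter> \<phi> -` {..B'}"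
    using improve[OF first(1) below] first(1) by auto
  moreover have "closed ({a..b} \<inter> \<phi> -` {..B'})"
    by (rule continuous_closed_preimage[OF cont]) auto
  ultimately have "closure {a..<s0} \<subseteq> {a..b} \<inter> \<phi> -` {..B'}"
    by (rule closure_minimal)
  moreover have "s0 \<in> closure {a..<s0}"
    using closure_atLeastLessThan[OF \<open>a < s0\<close>] \<open>a < s0\<close> by simp
  ultimately have "\<phi> s0 \<le> B'" by blast
  then show False using first better by simp
qed

lemma continuous_bounded_on_compact:
  fixes f :: "'a::topological_space \<Rightarrow> 'b::real_normed_vector"
  assumes "continuous_on UNIV f" "compact S"
  shows "\<exists>B>0. \<forall>z\<in>S. norm (f z) \<le> B"
proof -
  have "compact (f ` S)"
    by (rule compact_continuous_image[OF continuous_on_subset[OF assms(1)] assms(2)]) auto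
  then have "bounded (f ` S)" by (rule compact_imp_bounded)
  then show ?thesis by (simp add: bounded_pos)
qed

lemma norm_triple_components:
  fixes x0 x1 :: "'a::real_normed_vector" and t :: real
  assumes "norm (x0, x1, t) \<le> B"
  shows "norm x0 \<le> B" "norm x1 \<le> B" "\<bar>t\<bar> \<le> B"
  using assms norm_fst_le[of x0 "(x1, t)"] norm_snd_le[of "(x1, t)" x0]
    norm_fst_le[of x1 t] norm_snd_le[of t x1] by auto

text \<open>Smoothness is only used through continuity.\<close>
lemma smooth_continuous: "smooth f \<Longrightarrow> continuous_on UNIV f"
  by (metis smooth_def Ck.simps(1))

section \<open>Motions driven by a short kick\<close>

locale kicked_motion =
  fixes g :: "'a::banach \<Rightarrow> 'a" and h y y' :: "real \<Rightarrow> 'a" and d :: "real \<Rightarrow> real"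
    and e C :: real
  assumes e_pos: "0 < e"
    and d_cont: "continuous_on UNIV d"
    and d_zero: "\<And>t. t \<notin> {-e..e} \<Longrightarrow> d t = 0"
    and d_L1: "integral UNIV (\<lambda>t. \<bar>d t\<bar>) \<le> C"
    and y_deriv: "\<And>t. (y has_vector_derivative y' t) (at t)"
    and y'_deriv: "\<And>t. (y' has_vector_derivative (d t *\<^sub>R g (y t) + h t)) (at t)"
begin

lemma abs_kick_integrable_interval: "(\<lambda>t. \<bar>d t\<bar>) integrable_on {a..b}"
  by (intro integrable_continuous_interval continuous_intros continuous_on_subset[OF d_cont]) auto

lemma abs_kick_integrable: "(\<lambda>t. \<bar>d t\<bar>) integrable_on UNIV"
  by (rule integrable_on_superset[OF abs_kick_integrable_interval[of "-e" e]]) (auto simp: d_zero)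

lemma kick_integral_le: "integral {a..b} (\<lambda>t. \<bar>d t\<bar>) \<le> C"
  using integral_subset_le[OF _ abs_kick_integrable_interval abs_kick_integrable] d_L1
  by (meson order_trans subset_UNIV abs_ge_zero)

lemma C_nonneg: "0 \<le> C"
  using integral_nonneg[OF abs_kick_integrable] d_L1 by force

lemma y_continuous: "continuous_on UNIV y"
  using continuous_on_vector_derivative has_vector_derivative_at_within y_deriv by blast

lemma velocity_increment:
  assumes h_le: "\<And>t. t \<in> {min s u..max s u} \<Longrightarrow> norm (h t) \<le> H"
    and g_le: "\<And>t. t \<in> {min s u..max s u} \<Longrightarrow> d t \<noteq> 0 \<Longrightarrow> norm (g (y t)) \<le> G"
    and G: "0 \<le> G"
  shows "norm (y' u - y' s) \<le> C * G + \<bar>u - s\<bar> * H"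
proof -
  let ?I = "{min s u..max s u}"
  have force_le: "norm (d t *\<^sub>R g (y t) + h t) \<le> \<bar>d t\<bar> * G + H" if "t \<in> ?I" for t
  proof -
    have "norm (d t *\<^sub>R g (y t)) \<le> \<bar>d t\<bar> * G"
      using g_le[OF that] by (cases "d t = 0") (auto intro: mult_left_mono)
    then show ?thesis using h_le[OF that] norm_triangle_ineq[of "d t *\<^sub>R g (y t)" "h t"] by linarith
  qed
  have int_kick: "(\<lambda>t. \<bar>d t\<bar> * G) integrable_on ?I"
    using integrable_cmul[OF abs_kick_integrable_interval, of G] by (simp add: mult.commute)
  have int_force: "(\<lambda>t. \<bar>d t\<bar> * G + H) integrable_on ?I"
    by (rule integrable_add[OF int_kick integrable_const_ivl])
  have "norm (y' u - y' s) \<le> integral ?I (\<lambda>t. \<bar>d t\<bar> * G + H)"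
    by (rule norm_increment_le_integral[OF y'_deriv force_le int_force])
  also have "\<dots> = integral ?I (\<lambda>t. \<bar>d t\<bar>) * G + \<bar>u - s\<bar> * H"
    using integral_add[OF int_kick integrable_const_ivl, of H]
    by (simp add: max_def min_def)
  also have "\<dots> \<le> C * G + \<bar>u - s\<bar> * H"
    using mult_right_mono[OF kick_integral_le G] by simp
  finally show ?thesis .
qed

end

locale bounded_kicked_motion = kicked_motion +
  fixes R T H G :: real
  assumes e_small: "e \<le> 1/2" and T_ge: "1 \<le> T"
    and h_bound: "\<And>t. t \<in> {-T..T} \<Longrightarrow> norm (h t) \<le> H"
    and g_bound: "\<And>z. norm z \<le> 2*R + 2*T*H + 1 \<Longrightarrow> norm (g z) \<le> G" and G_nonneg: "0 \<le> G"
    and init_pos: "norm (y (-1)) \<le> R" and init_vel: "norm (y' (-1)) \<le> R"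
    and kick_short: "6 * e * (R + C*G + 2*T*H) \<le> 1"
begin

lemma H_nonneg: "0 \<le> H"
  using order_trans[OF norm_ge_zero h_bound[of 0]] T_ge by simp

lemma R_nonneg: "0 \<le> R"
  using init_pos norm_ge_zero[of "y (-1)"] by linarith

lemma V_nonneg: "0 \<le> R + C*G + 2*T*H"
  using R_nonneg C_nonneg G_nonneg H_nonneg T_ge by simp

lemma velocity_bound:
  assumes u: "u \<in> {-T..T}" and Gb: "0 \<le> Gb"
    and g_le: "\<And>t. t \<in> {min (-1) u..max (-1) u} \<Longrightarrow> d t \<noteq> 0 \<Longrightarrow> norm (g (y t)) \<le> Gb"
  shows "norm (y' u) \<le> R + C*Gb + 2*T*H"
proof -
  have "norm (y' u - y' (-1)) \<le> C * Gb + \<bar>u - (-1)\<bar> * H"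
    by (rule velocity_increment[OF h_bound g_le Gb]) (use u T_ge in auto)
  also have "\<bar>u - (-1)\<bar> * H \<le> 2*T*H"
    using mult_right_mono[OF _ H_nonneg, of "\<bar>u + 1\<bar>" "2*T"] u T_ge by auto
  finally show ?thesis using init_vel norm_triangle_sub[of "y' u" "y' (-1)"] by linarith
qed

text \<open>Step (1): before the kick the force is h alone.\<close>
lemma position_before_kick: "norm (y (-2*e)) \<le> 2*R + 2*T*H"
proof -
  have "norm (y' u) \<le> R + 2*T*H" if "u \<in> {min (-1) (-2*e)..max (-1) (-2*e)}" for u
    using velocity_bound[of u 0] that d_zero e_pos e_small T_ge by auto
  then have "norm (y (-2*e) - y (-1)) \<le> \<bar>-2*e - (-1)\<bar> * (R + 2*T*H)"
    by (rule norm_increment_le_const[OF y_deriv])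
  also have "\<dots> \<le> R + 2*T*H"
    using e_pos e_small R_nonneg H_nonneg T_ge by (intro mult_left_le_one_le) auto
  finally show ?thesis using init_pos norm_triangle_sub[of "y (-2*e)" "y (-1)"] by linarith
qed

text \<open>Step (2): during the kick the motion stays in the ball where g is bounded by G.\<close>
lemma bounded_during_kick:
  assumes t: "t \<in> {-2*e..e}"
  shows "norm (y t) < 2*R + 2*T*H + 1"
proof (rule continuity_bootstrap[where \<phi> = "\<lambda>t. norm (y t)" and B' = "2*R + 2*T*H + 1/2"])
  show "continuous_on {-2*e..e} (\<lambda>t. norm (y t))"
    by (intro continuous_intros continuous_on_subset[OF y_continuous]) auto
  show "norm (y (-2*e)) < 2*R + 2*T*H + 1" using position_before_kick by simp
  fix s u
  assume s: "s \<in> {-2*e..e}"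
    and inside: "\<forall>v\<in>{-2*e..<s}. norm (y v) < 2*R + 2*T*H + 1" and u: "u \<in> {-2*e..<s}"
  have speed: "norm (y' w) \<le> R + C*G + 2*T*H" if w: "w \<in> {min (-2*e) u..max (-2*e) u}" for w
  proof (rule velocity_bound[OF _ G_nonneg])
    show "w \<in> {-T..T}" using w u s e_small T_ge by auto
    fix t assume "t \<in> {min (-1) w..max (-1) w}" "d t \<noteq> 0"
    moreover have "t \<in> {-e..e}" using d_zero \<open>d t \<noteq> 0\<close> by blast
    ultimately have "t \<in> {-2*e..<s}" using w u e_pos e_small by auto
    then show "norm (g (y t)) \<le> G" using inside g_bound by force
  qed
  have "norm (y u - y (-2*e)) \<le> \<bar>u - (-2*e)\<bar> * (R + C*G + 2*T*H)"
    by (rule norm_increment_le_const[OF y_deriv speed])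
  also have "\<dots> \<le> 1/2"
    using mult_right_mono[OF _ V_nonneg, of "\<bar>u + 2*e\<bar>" "3*e"] u s kick_short
    by auto
  finally show "norm (y u) \<le> 2*R + 2*T*H + 1/2"
    using position_before_kick norm_triangle_sub[of "y u" "y (-2*e)"] by linarith
qed (use t in auto)

lemma a_priori_bound:
  assumes t: "t \<in> {-T..T}"
  shows "norm (y t) \<le> R + 2*T*(R + C*G + 2*T*H)"
proof -
  have speed: "norm (y' u) \<le> R + C*G + 2*T*H" if u: "u \<in> {min (-1) t..max (-1) t}" for u
  proof (rule velocity_bound[OF _ G_nonneg])
    show "u \<in> {-T..T}" using u t T_ge by auto
    fix \<tau> assume "d \<tau> \<noteq> 0"
    then have "\<tau> \<in> {-2*e..e}" using d_zero[of \<tau>] e_pos by force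
    then show "norm (g (y \<tau>)) \<le> G" using bounded_during_kick g_bound by force
  qed
  have "norm (y t - y (-1)) \<le> \<bar>t - (-1)\<bar> * (R + C*G + 2*T*H)"
    by (rule norm_increment_le_const[OF y_deriv speed])
  also have "\<dots> \<le> 2*T * (R + C*G + 2*T*H)"
    using mult_right_mono[OF _ V_nonneg, of "\<bar>t + 1\<bar>" "2*T"] t T_ge by auto
  finally show ?thesis using init_pos norm_triangle_sub[of "y t" "y (-1)"] by linarith
qed

end

lemma solves_ivp_a_priori_bound:
  fixes g :: "'a::banach \<Rightarrow> 'a"
  assumes sol: "solves_ivp g h d x0 x1 y"
    and e: "0 < e" "e \<le> 1/2" and d_cont: "continuous_on UNIV d"
    and d_supp: "closure {t. d t \<noteq> 0} \<subseteq> {-e..e}"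
    and d_L1: "integral UNIV (\<lambda>t. \<bar>d t\<bar>) \<le> C"
    and T: "1 \<le> T" and h_le: "\<And>t. t \<in> {-T..T} \<Longrightarrow> norm (h t) \<le> H"
    and g_le: "\<And>z. norm z \<le> 2*R + 2*T*H + 1 \<Longrightarrow> norm (g z) \<le> G" and G: "0 \<le> G"
    and init: "norm x0 \<le> R" "norm x1 \<le> R"
    and short: "6 * e * (R + C*G + 2*T*H) \<le> 1"
    and t: "t \<in> {-T..T}"
  shows "norm (y t) \<le> R + 2*T*(R + C*G + 2*T*H)"
proof -
  obtain y' where init_eqs: "y (-1) = x0" "y' (-1) = x1"
    and y_deriv: "\<And>t. (y has_vector_derivative y' t) (at t)"
    and y'_deriv: "\<And>t. (y' has_vector_derivative (d t *\<^sub>R g (y t) + h t)) (at t)"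
    using sol unfolding solves_ivp_def by blast
  have d_zero: "d t = 0" if "t \<notin> {-e..e}" for t
    using d_supp closure_subset[of "{t. d t \<noteq> 0}"] that by blast
  interpret bounded_kicked_motion g h y y' d e C R T H G
    by unfold_locales (fact e d_cont d_zero d_L1 y_deriv y'_deriv T h_le g_le G short
      init[folded init_eqs])+
  show ?thesis using a_priori_bound[OF t] .
qed

text \<open>The state space must be finite dimensional (heine_borel) so that g is bounded on balls.\<close>
lemma uniform_bound_for_short_kicks:
  fixes g :: "'a::{banach,heine_borel} \<Rightarrow> 'a" and h :: "real \<Rightarrow> 'a"
    and \<delta> :: "real \<Rightarrow> real \<Rightarrow> real"
  assumes g_cont: "continuous_on UNIV g" and h_cont: "continuous_on UNIV h"
    and \<delta>_cont: "\<forall>e\<in>{0<..1}. continuous_on UNIV (\<delta> e)"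
    and \<delta>_supp: "\<forall>e\<in>{0<..1}. closure {t. \<delta> e t \<noteq> 0} \<subseteq> {-e..e}"
    and \<delta>_L1: "\<exists>C>0. \<exists>e0\<in>{0<..1}. \<forall>e\<in>{0<..e0}. integral UNIV (\<lambda>t. \<bar>\<delta> e t\<bar>) \<le> C"
    and B: "0 < B"
  shows "\<exists>CM>0. \<exists>e1\<in>{0<..1}. \<forall>e\<in>{0<..e1}. \<forall>x0 x1 y t. solves_ivp g h (\<delta> e) x0 x1 y \<longrightarrow>
           norm x0 \<le> B \<longrightarrow> norm x1 \<le> B \<longrightarrow> \<bar>t\<bar> \<le> B \<longrightarrow> norm (y t) \<le> CM"
proof -
  define T where "T = B + 1"
  obtain C e0 where C: "0 < C" "e0 \<in> {0<..1}" "\<forall>e\<in>{0<..e0}. integral UNIV (\<lambda>t. \<bar>\<delta> e t\<bar>) \<le> C"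
    using \<delta>_L1 by blast
  obtain H where H: "0 < H" "\<forall>t\<in>{-T..T}. norm (h t) \<le> H"
    using continuous_bounded_on_compact[OF h_cont compact_Icc] by blast
  obtain G where G: "0 < G" "\<forall>z\<in>cball 0 (2*B + 2*T*H + 1). norm (g z) \<le> G"
    using continuous_bounded_on_compact[OF g_cont compact_cball[of 0]] by blast
  define V where "V = B + C*G + 2*T*H"
  have "0 < V" unfolding V_def T_def
    using B C(1) G(1) H(1) by (intro add_pos_pos mult_pos_pos) simp_all
  define e1 where "e1 = min e0 (min (1/2) (1/(6*V)))"
  have e1: "e1 \<in> {0<..1}" using C \<open>0 < V\<close> by (auto simp: e1_def)
  have "norm (y t) \<le> B + 2*T*V"
    if e: "e \<in> {0<..e1}" and sol: "solves_ivp g h (\<delta> e) x0 x1 y"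
      and data: "norm x0 \<le> B" "norm x1 \<le> B" "\<bar>t\<bar> \<le> B" for e x0 x1 y t
  proof -
    have e_unit: "e \<in> {0<..1}" and e_half: "e \<le> 1/2" using e e1 by (auto simp: e1_def)
    have "e \<le> 1/(6*V)" using e by (simp add: e1_def)
    then have "e * (6*V) \<le> 1" using \<open>0 < V\<close> by (simp add: le_divide_eq)
    then have short: "6 * e * (B + C*G + 2*T*H) \<le> 1" by (simp add: V_def algebra_simps)
    show ?thesis unfolding V_def
    proof (rule solves_ivp_a_priori_bound[OF sol _ e_half _ _ _ _ _ _ _ data(1,2) short])
      show "0 < e" using e_unit by simp
      show "continuous_on UNIV (\<delta> e)" using \<delta>_cont e_unit by blast
      show "closure {t. \<delta> e t \<noteq> 0} \<subseteq> {-e..e}" using \<delta>_supp e_unit by blast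
      show "integral UNIV (\<lambda>t. \<bar>\<delta> e t\<bar>) \<le> C" using C(3) e by (simp add: e1_def)
      show "1 \<le> T" using B by (simp add: T_def)
      show "\<And>t. t \<in> {-T..T} \<Longrightarrow> norm (h t) \<le> H" using H(2) by blast
      show "\<And>z. norm z \<le> 2*B + 2*T*H + 1 \<Longrightarrow> norm (g z) \<le> G" using G(2) by simp
      show "0 \<le> G" using G(1) by simp
      show "t \<in> {-T..T}" using data(3) by (simp add: T_def abs_le_iff)
    qed
  qed
  moreover have "0 < B + 2*T*V"
    using B \<open>0 < V\<close> by (intro add_pos_pos mult_pos_pos) (simp_all add: T_def)
  ultimately show ?thesis using e1 by blast
qed

theorem proposition4p3:
  fixes g :: "real^'n \<Rightarrow> real^'n"
    and h :: "real \<Rightarrow> real^'n"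
    and \<delta> :: "real \<Rightarrow> real \<Rightarrow> real"
    and x :: "real \<Rightarrow> ((real^'n) \<times> (real^'n) \<times> real) \<Rightarrow> real^'n"
  assumes g_smooth: "smooth g"
    and h_smooth: "smooth h"
    and \<delta>_smooth: "\<forall>e\<in>{0<..1}. smooth (\<delta> e)"
    and \<delta>_supp: "\<forall>e\<in>{0<..1}. closure {t. \<delta> e t \<noteq> 0} \<subseteq> {-e..e}"
    and \<delta>_L1: "\<exists>C>0. \<exists>e0\<in>{0<..1}. \<forall>e\<in>{0<..e0}. integral UNIV (\<lambda>t. \<bar>\<delta> e t\<bar>) \<le> C"
    and x_smooth: "\<forall>e\<in>{0<..1}. smooth (x e)"
    and x_asol: "\<forall>K :: ((real^'n) \<times> (real^'n)) set. compact K \<longrightarrow>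
        (\<exists>eK\<in>{0<..1}. \<forall>(x0, x1)\<in>K. \<forall>e\<in>{0<..eK}.
            solves_ivp g h (\<delta> e) x0 x1 (\<lambda>t. x e (x0, x1, t)))"
  shows "\<forall>M :: ((real^'n) \<times> (real^'n) \<times> real) set. compact M \<longrightarrow>
      (\<exists>CM>0. \<exists>e1\<in>{0<..1}. \<forall>e\<in>{0<..e1}. \<forall>p\<in>M. norm (x e p) \<le> CM)"
proof (intro allI impI)
  fix M :: "((real^'n) \<times> (real^'n) \<times> real) set"
  assume "compact M"
  obtain B where B: "0 < B" "\<forall>p\<in>M. norm p \<le> B"
    using compact_imp_bounded[OF \<open>compact M\<close>] bounded_pos by blast
  have \<delta>_cont: "\<forall>e\<in>{0<..1}. continuous_on UNIV (\<delta> e)"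
    using \<delta>_smooth smooth_continuous by blast
  obtain CM e1 where CM: "0 < CM" "e1 \<in> {0<..1}"
    "\<forall>e\<in>{0<..e1}. \<forall>x0 x1 y t. solves_ivp g h (\<delta> e) x0 x1 y \<longrightarrow>
       norm x0 \<le> B \<longrightarrow> norm x1 \<le> B \<longrightarrow> \<bar>t\<bar> \<le> B \<longrightarrow> norm (y t) \<le> CM"
    using uniform_bound_for_short_kicks[OF smooth_continuous[OF g_smooth]
        smooth_continuous[OF h_smooth] \<delta>_cont \<delta>_supp \<delta>_L1 B(1)] by blast
  define K where "K = (\<lambda>p. (fst p, fst (snd p))) ` M"
  have "compact K" unfolding K_def by (intro compact_continuous_image continuous_intros \<open>compact M\<close>)
  then obtain eK where eK: "eK \<in> {0<..1}"
    "\<forall>(x0, x1)\<in>K. \<forall>e\<in>{0<..eK}. solves_ivp g h (\<delta> e) x0 x1 (\<lambda>t. x e (x0, x1, t))"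
    using x_asol by blast
  have "norm (x e p) \<le> CM" if e: "e \<in> {0<..min e1 eK}" and p: "p \<in> M" for e p
  proof -
    obtain x0 x1 t where p_eq: "p = (x0, x1, t)" by (cases p) auto
    have "(x0, x1) \<in> K" unfolding K_def by (rule rev_image_eqI[OF p[unfolded p_eq]]) simp
    then have sol: "solves_ivp g h (\<delta> e) x0 x1 (\<lambda>t. x e (x0, x1, t))" using eK(2) e by auto
    have "norm (x0, x1, t) \<le> B" using B(2) p by (simp add: p_eq)
    note data = norm_triple_components[OF this]
    have "e \<in> {0<..e1}" using e by simp
    from CM(3)[rule_format, OF this sol data] show ?thesis by (simp add: p_eq)
  qed
  moreover have "min e1 eK \<in> {0<..1}" using CM(2) eK(1) by auto
  ultimately show "\<exists>CM>0. \<exists>e1\<in>{0<..1}. \<forall>e\<in>{0<..e1}. \<forall>p\<in>M. norm (x e p) \<le> CM"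
    using CM(1) by blast
qed

end
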